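(* Let $r$ be a nonnegative integer. For real $x$ with $|x|<1$, $$\sum_{m=0}^\infty\zeta^\star(r+2,\{2\}^m)x^{2m}=\sum_{k=1}^\infty\frac{1}{k^{r+2}}\frac{\Gamma(k+x)\Gamma(k-x)}{\Gamma(k)^2}.$$
   Context: $\zeta^\star(\alpha_1,\ldots,\alpha_r)=\sum_{1\le k_1\le\cdots\le k_r}k_1^{-\alpha_1}\cdots k_r^{-\alpha_r}$ for positive integers $\alpha_i$ with $\alpha_1\ge2$ in the nontrivial-first-entry convention used here (the argument tuple $(r+2,\{2\}^m)$ consists of $r+2$ followed by $m$ copies of $2$; for $m=0$ it is $\zeta(r+2)$). $\Gamma$ is the gamma function. *)

theory Defs
  imports "HOL-Analysis.Analysis"
begin

definition mzs_index :: "nat list \<Rightarrow> nat list set" where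
  "mzs_index as = {ks. length ks = length as \<and> sorted ks \<and> (\<forall>k\<in>set ks. 1 \<le> k)}"

definition zeta_star :: "nat list \<Rightarrow> real" where
  "zeta_star as = (\<Sum>\<^sub>\<infinity>ks\<in>mzs_index as. \<Prod>i<length as. 1 / real (ks ! i) ^ (as ! i))"

end

theory Submission
  imports Defs
begin

(* Gamma(k+x) Gamma(k-x) / Gamma(k)^2 is the tail product of 1/(1 - x^2/j^2) over j >= k: both
   sides satisfy the same one-step recursion in k and tend to 1. Expanding every factor as a geometric
   series turns this tail into the generating function of the weakly increasing tuples
   k <= j_1 <= ... <= j_m, each weighted by x^(2m) / (j_1 ... j_m)^2; it is reached as the limit of
   finite truncations that bound both the entries and their multiplicities. Multiplying by
   k^-(r+2) and summing over k >= 1 gives a sum over all tuples 1 <= k <= j_1 <= ... <= j_m, and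
   collecting the terms of equal length m yields zeta_star(r+2, {2}^m) x^(2m). All terms are
   nonnegative, which justifies every rearrangement. *)

lemma count_list_replicate: "count_list (replicate i k) j = (if k = j then i else 0)"
  by (induction i) auto

lemma count_list_filter_le: "count_list (filter P xs) x \<le> count_list xs x"
  by (induction xs) auto

lemma sorted_eq_replicate_count_append_filter:
  assumes "sorted ks" "\<forall>j\<in>set ks. k \<le> j"
  shows "ks = replicate (count_list ks k) k @ filter ((<) k) ks"
  using assms
proof (induction ks)
  case (Cons a ks)
  show ?case
  proof (cases "a = k")
    case False
    with Cons.prems have "\<forall>j\<in>set (a # ks). k < j" by force
    then show ?thesis by (auto simp: count_list_0_iff)
  qed (use Cons in auto)
qed simp

lemma prod_list_map_eq_prod_nth: "(\<Prod>x\<leftarrow>xs. f x) = (\<Prod>i<length xs. f (xs ! i))"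
  by (induction xs) (simp_all add: prod.lessThan_Suc_shift del: prod.lessThan_Suc)

lemma has_sum_infsum_fibres:
  fixes f :: "'a \<Rightarrow> 'b::banach"
  assumes "(f has_sum S) A"
  shows "((\<lambda>m. infsum f {x\<in>A. g x = m}) has_sum S) UNIV"
proof -
  have "bij_betw (\<lambda>x. (g x, x)) A (Sigma UNIV (\<lambda>m. {x\<in>A. g x = m}))"
    by (rule bij_betwI[where g = snd]) auto
  with assms have "((\<lambda>p. f (snd p)) has_sum S) (Sigma UNIV (\<lambda>m. {x\<in>A. g x = m}))"
    by (simp add: has_sum_reindex_bij_betw[symmetric])
  moreover have "(f has_sum infsum f {x\<in>A. g x = m}) {x\<in>A. g x = m}" for m
    using summable_on_subset_banach[OF has_sum_imp_summable[OF assms]] by auto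
  ultimately show ?thesis
    using has_sum_SigmaD[where f = "\<lambda>p. f (snd p)" and A = UNIV and B = "\<lambda>m. {x\<in>A. g x = m}"]
    by simp
qed

lemma Gamma_add_Suc_over_fact_powr_LIMSEQ:
  fixes z :: real
  assumes "z \<notin> \<int>\<^sub>\<le>\<^sub>0"
  shows "(\<lambda>n. Gamma (real (Suc n) + z) / (fact n * real n powr z)) \<longlonglongrightarrow> 1"
proof -
  have "(\<lambda>n. Gamma z / Gamma_series z n) \<longlonglongrightarrow> Gamma z / Gamma z"
    using assms by (intro tendsto_intros) (auto simp: Gamma_eq_zero_iff)
  then have lim: "(\<lambda>n. Gamma z / Gamma_series z n) \<longlonglongrightarrow> 1"
    using assms by (simp add: Gamma_eq_zero_iff)
  have "Gamma z / Gamma_series z n = Gamma (real (Suc n) + z) / (fact n * real n powr z)"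
    if "n > 0" for n
    using that assms
    by (simp add: Gamma_series_def pochhammer_Gamma powr_def Gamma_eq_zero_iff field_simps)
  then have "eventually (\<lambda>n. Gamma z / Gamma_series z n =
      Gamma (real (Suc n) + z) / (fact n * real n powr z)) sequentially"
    by (auto intro: eventually_mono[OF eventually_gt_at_top[of 0]])
  then show ?thesis by (rule Lim_transform_eventually[OF lim])
qed

definition Gamma_ratio :: "real \<Rightarrow> nat \<Rightarrow> real" where
  "Gamma_ratio x k = Gamma (real k + x) * Gamma (real k - x) / Gamma (real k) ^ 2"

lemma Gamma_ratio_pos:
  assumes "\<bar>x\<bar> < real k"
  shows "0 < Gamma_ratio x k"
proof -
  have "0 < real k + x" "0 < real k - x" "0 < real k" using assms by auto
  then show ?thesis
    unfolding Gamma_ratio_def by (intro divide_pos_pos mult_pos_pos zero_less_power Gamma_real_pos)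
qed

lemma Gamma_ratio_Suc:
  assumes "\<bar>x\<bar> < real k"
  shows "Gamma_ratio x (Suc k) = Gamma_ratio x k * (1 - x\<^sup>2 / real k ^ 2)"
proof -
  have pos: "0 < real k + x" "0 < real k - x" "0 < real k" using assms by auto
  then have "real k + x \<notin> \<int>\<^sub>\<le>\<^sub>0" "real k - x \<notin> \<int>\<^sub>\<le>\<^sub>0" "real k \<notin> \<int>\<^sub>\<le>\<^sub>0"
    by (auto elim!: nonpos_Ints_cases)
  then have plus: "Gamma (real (Suc k) + x) = (real k + x) * Gamma (real k + x)"
    and minus: "Gamma (real (Suc k) - x) = (real k - x) * Gamma (real k - x)"
    and nat: "Gamma (real (Suc k)) = real k * Gamma (real k)"
    by (metis Gamma_plus1 add.commute add.left_commute of_nat_Suc,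
        metis Gamma_plus1 add.commute add_diff_eq of_nat_Suc,
        metis Gamma_plus1 add.commute of_nat_Suc)
  from pos show ?thesis
    unfolding Gamma_ratio_def plus minus nat by (simp add: field_simps power2_eq_square)
qed

lemma Gamma_ratio_LIMSEQ:
  assumes "\<bar>x\<bar> < 1"
  shows "Gamma_ratio x \<longlonglongrightarrow> 1"
proof (cases "x = 0")
  case True
  \<comment> \<open>Gamma has a pole at z = - x = 0, so the asymptotics below do not apply.\<close>
  have "Gamma_ratio x (Suc n) = 1" for n
    using True Gamma_fact[of n, where 'a=real] by (simp add: Gamma_ratio_def power2_eq_square)
  then have "(\<lambda>n. Gamma_ratio x (Suc n)) \<longlonglongrightarrow> 1" by simp
  then show ?thesis by (rule LIMSEQ_imp_Suc)
next
  case False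
  with assms have "x \<notin> \<int>"
    by (auto elim!: Ints_cases)
  then have no_pole: "x \<notin> \<int>\<^sub>\<le>\<^sub>0" "- x \<notin> \<int>\<^sub>\<le>\<^sub>0"
    using nonpos_Ints_subset_Ints by (auto simp: minus_in_Ints_iff)
  let ?a = "\<lambda>z n. Gamma (real (Suc n) + z) / (fact n * real n powr z)"
  from tendsto_mult[OF no_pole[THEN Gamma_add_Suc_over_fact_powr_LIMSEQ]]
  have lim: "(\<lambda>n. ?a x n * ?a (- x) n) \<longlonglongrightarrow> 1"
    by simp
  have "?a x n * ?a (- x) n = Gamma_ratio x (Suc n)" if "n > 0" for n
    using that by (simp add: Gamma_ratio_def powr_minus Gamma_fact[where 'a=real, symmetric]
                    power2_eq_square field_simps)
  then have "eventually (\<lambda>n. ?a x n * ?a (- x) n = Gamma_ratio x (Suc n)) sequentially"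
    by (auto intro: eventually_mono[OF eventually_gt_at_top[of 0]])
  then have "(\<lambda>n. Gamma_ratio x (Suc n)) \<longlonglongrightarrow> 1"
    by (rule Lim_transform_eventually[OF lim])
  then show ?thesis by (rule LIMSEQ_imp_Suc)
qed

lemma Gamma_ratio_antimono:
  assumes "\<bar>x\<bar> < 1" "1 \<le> k" "k \<le> M"
  shows "Gamma_ratio x M \<le> Gamma_ratio x k"
  using assms(3)
proof (induction M rule: dec_induct)
  case (step M)
  have "\<bar>x\<bar> < real M" using assms step.hyps by linarith
  moreover have "x\<^sup>2 \<le> real M ^ 2"
    using power_mono[of "\<bar>x\<bar>" "real M" 2] \<open>\<bar>x\<bar> < real M\<close> by simp
  ultimately have "Gamma_ratio x (Suc M) \<le> Gamma_ratio x M"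
    using Gamma_ratio_pos[of x M]
    by (simp add: Gamma_ratio_Suc mult_left_le divide_le_eq_1)
  with step.IH show ?case by linarith
qed simp

lemma Gamma_ratio_ge_1:
  assumes "\<bar>x\<bar> < 1" "1 \<le> k"
  shows "1 \<le> Gamma_ratio x k"
  using Gamma_ratio_LIMSEQ[OF assms(1)]
  by (rule LIMSEQ_le_const2) (use Gamma_ratio_antimono[OF assms] in auto)

lemma square_div_square_bounds:
  assumes "\<bar>x\<bar> < 1" "1 \<le> j"
  shows "0 \<le> x\<^sup>2 / real j ^ 2" "x\<^sup>2 / real j ^ 2 < 1"
proof -
  have "x\<^sup>2 < 1" using assms(1) by (simp add: abs_square_less_1)
  moreover have "1 \<le> real j ^ 2" using assms(2) by simp
  ultimately show "0 \<le> x\<^sup>2 / real j ^ 2" "x\<^sup>2 / real j ^ 2 < 1" by (simp_all add: divide_less_eq)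
qed

lemma prod_inverse_one_minus_eq_Gamma_ratio:
  assumes "\<bar>x\<bar> < 1" "1 \<le> k" "k \<le> M"
  shows "(\<Prod>j\<in>{k..<M}. 1 / (1 - x\<^sup>2 / real j ^ 2)) = Gamma_ratio x k / Gamma_ratio x M"
  using assms(3)
proof (induction M rule: dec_induct)
  case base
  show ?case using Gamma_ratio_pos[of x k] assms by simp
next
  case (step M)
  have "\<bar>x\<bar> < real M" using assms step.hyps by linarith
  then show ?case
    using step.IH step.hyps Gamma_ratio_pos[of x M] by (simp add: Gamma_ratio_Suc)
qed

definition sorted_lists_ge :: "nat \<Rightarrow> nat list set" where
  "sorted_lists_ge k = {ks. sorted ks \<and> (\<forall>j\<in>set ks. k \<le> j)}"

definition bounded_sorted_lists :: "nat \<Rightarrow> nat \<Rightarrow> nat \<Rightarrow> nat list set" where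
  "bounded_sorted_lists k M L =
     {ks \<in> sorted_lists_ge k. (\<forall>j\<in>set ks. j < M) \<and> (\<forall>j. count_list ks j < L)}"

definition weight :: "real \<Rightarrow> nat list \<Rightarrow> real" where
  "weight y ks = y ^ length ks * (\<Prod>j\<leftarrow>ks. 1 / real j ^ 2)"

lemma weight_nonneg: "0 \<le> y \<Longrightarrow> 0 \<le> weight y ks"
  unfolding weight_def by (intro mult_nonneg_nonneg zero_le_power prod_list_nonneg) auto

lemma weight_replicate_append: "weight y (replicate i k @ ks) = (y / real k ^ 2) ^ i * weight y ks"
  unfolding weight_def by (simp add: power_add power_divide power_mult_distrib field_simps)

lemma bounded_sorted_lists_empty_range:
  assumes "M \<le> k"
  shows "bounded_sorted_lists k M L \<subseteq> {[]}"
proof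
  fix ks assume "ks \<in> bounded_sorted_lists k M L"
  then have "\<forall>j\<in>set ks. k \<le> j \<and> j < M"
    by (simp add: bounded_sorted_lists_def sorted_lists_ge_def)
  with assms show "ks \<in> {[]}" by (cases ks) auto
qed

lemma Nil_in_bounded_sorted_lists: "[] \<in> bounded_sorted_lists k M L \<longleftrightarrow> 0 < L"
  by (simp add: bounded_sorted_lists_def sorted_lists_ge_def)

lemma bij_betw_replicate_append_bounded_sorted_lists:
  assumes "k < M"
  shows "bij_betw (\<lambda>(i, ks). replicate i k @ ks)
           ({..<L} \<times> bounded_sorted_lists (Suc k) M L) (bounded_sorted_lists k M L)"
proof (rule bij_betwI[where g = "\<lambda>ks. (count_list ks k, filter ((<) k) ks)"])
  show "(\<lambda>(i, ks). replicate i k @ ks)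
          \<in> {..<L} \<times> bounded_sorted_lists (Suc k) M L \<rightarrow> bounded_sorted_lists k M L"
    using assms
    by (fastforce simp: bounded_sorted_lists_def sorted_lists_ge_def sorted_append
        count_list_replicate Suc_le_eq)
  show "(\<lambda>ks. (count_list ks k, filter ((<) k) ks))
          \<in> bounded_sorted_lists k M L \<rightarrow> {..<L} \<times> bounded_sorted_lists (Suc k) M L"
    by (auto simp: bounded_sorted_lists_def sorted_lists_ge_def sorted_wrt_filter
        intro: le_less_trans[OF count_list_filter_le])
  show "(\<lambda>(i, ks). replicate i k @ ks) (count_list ks k, filter ((<) k) ks) = ks"
    if "ks \<in> bounded_sorted_lists k M L" for ks
    using that sorted_eq_replicate_count_append_filter[of ks k]
    by (simp add: bounded_sorted_lists_def sorted_lists_ge_def)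
  show "(\<lambda>ks. (count_list ks k, filter ((<) k) ks)) ((\<lambda>(i, ks). replicate i k @ ks) p) = p"
    if "p \<in> {..<L} \<times> bounded_sorted_lists (Suc k) M L" for p
    using that
    by (fastforce simp: bounded_sorted_lists_def sorted_lists_ge_def count_list_replicate
        filter_id_conv count_list_0_iff Suc_le_eq)
qed

lemma finite_bounded_sorted_lists: "finite (bounded_sorted_lists k M L)"
proof (induction "M - k" arbitrary: k)
  case 0
  then show ?case by (intro finite_subset[OF bounded_sorted_lists_empty_range]) auto
next
  case (Suc d)
  then have "k < M" by simp
  have "finite ({..<L} \<times> bounded_sorted_lists (Suc k) M L)"
    using Suc.hyps(1)[of "Suc k"] Suc.hyps(2) by simp
  then show ?case
    using bij_betw_finite[OF bij_betw_replicate_append_bounded_sorted_lists[OF \<open>k < M\<close>]] by simp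
qed

lemma sum_weight_bounded_sorted_lists:
  assumes "0 < L"
  shows "(\<Sum>ks\<in>bounded_sorted_lists k M L. weight y ks) = (\<Prod>j\<in>{k..<M}. \<Sum>i<L. (y / real j ^ 2) ^ i)"
proof (induction "M - k" arbitrary: k)
  case 0
  then have "bounded_sorted_lists k M L = {[]}"
    using assms 0 bounded_sorted_lists_empty_range[of M k L] Nil_in_bounded_sorted_lists[of k M L]
    by auto
  with 0 show ?case by (simp add: weight_def)
next
  case (Suc d)
  then have "k < M" by simp
  have "(\<Sum>ks\<in>bounded_sorted_lists k M L. weight y ks)
      = (\<Sum>(i, ks)\<in>{..<L} \<times> bounded_sorted_lists (Suc k) M L. weight y (replicate i k @ ks))"
    using sum.reindex_bij_betw[OF bij_betw_replicate_append_bounded_sorted_lists[OF \<open>k < M\<close>, of L],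
        of "weight y"]
    by (simp add: case_prod_unfold)
  also have "\<dots> = (\<Sum>i<L. (y / real k ^ 2) ^ i) * (\<Sum>ks\<in>bounded_sorted_lists (Suc k) M L. weight y ks)"
    by (simp add: weight_replicate_append sum_product sum.cartesian_product case_prod_unfold)
  also have "\<dots> = (\<Prod>j\<in>{k..<M}. \<Sum>i<L. (y / real j ^ 2) ^ i)"
    using Suc.hyps \<open>k < M\<close> by (simp add: prod.atLeast_Suc_lessThan)
  finally show ?case .
qed

lemma finite_subset_bounded_sorted_lists:
  assumes "finite F" "F \<subseteq> sorted_lists_ge k"
  obtains M L where "k \<le> M" "0 < L" "F \<subseteq> bounded_sorted_lists k M L"
proof
  let ?M = "Suc (k + (\<Sum>ks\<in>F. sum_list ks))" and ?L = "Suc (\<Sum>ks\<in>F. length ks)"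
  show "F \<subseteq> bounded_sorted_lists k ?M ?L"
  proof
    fix ks assume ks: "ks \<in> F"
    have "j < ?M" if "j \<in> set ks" for j
      using member_le_sum_list[OF that] member_le_sum[OF ks _ assms(1), of sum_list] by simp
    moreover have "count_list ks j < ?L" for j
      using count_le_length[of ks j] member_le_sum[OF ks _ assms(1), of length] by simp
    ultimately show "ks \<in> bounded_sorted_lists k ?M ?L"
      using ks assms(2) by (auto simp: bounded_sorted_lists_def)
  qed
qed auto

lemma sum_weight_bounded_sorted_lists_le:
  assumes "\<bar>x\<bar> < 1" "1 \<le> k" "k \<le> M" "0 < L"
  shows "(\<Sum>ks\<in>bounded_sorted_lists k M L. weight (x\<^sup>2) ks) \<le> Gamma_ratio x k / Gamma_ratio x M"
proof -
  have "(\<Sum>i<L. (x\<^sup>2 / real j ^ 2) ^ i) \<le> 1 / (1 - x\<^sup>2 / real j ^ 2)" if "j \<in> {k..<M}" for j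
    using square_div_square_bounds[OF assms(1), of j] that assms(2)
    by (simp add: sum_gp_strict divide_right_mono)
  then have "(\<Prod>j\<in>{k..<M}. \<Sum>i<L. (x\<^sup>2 / real j ^ 2) ^ i) \<le> (\<Prod>j\<in>{k..<M}. 1 / (1 - x\<^sup>2 / real j ^ 2))"
    by (intro prod_mono) (auto intro!: sum_nonneg)
  then show ?thesis
    using assms by (simp add: sum_weight_bounded_sorted_lists prod_inverse_one_minus_eq_Gamma_ratio)
qed

lemma has_sum_weight_Gamma_ratio:
  assumes x: "\<bar>x\<bar> < 1" and k: "1 \<le> k"
  shows "(weight (x\<^sup>2) has_sum Gamma_ratio x k) (sorted_lists_ge k)"
proof -
  let ?w = "weight (x\<^sup>2)"
  have bound: "sum ?w F \<le> Gamma_ratio x k" if F: "finite F" "F \<subseteq> sorted_lists_ge k" for F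
  proof -
    obtain M L where truncation: "k \<le> M" "0 < L" "F \<subseteq> bounded_sorted_lists k M L"
      using finite_subset_bounded_sorted_lists[OF F] .
    have "sum ?w F \<le> sum ?w (bounded_sorted_lists k M L)"
      using truncation by (intro sum_mono2 finite_bounded_sorted_lists weight_nonneg) auto
    also have "\<dots> \<le> Gamma_ratio x k / Gamma_ratio x M"
      using sum_weight_bounded_sorted_lists_le[OF x k truncation(1,2)] .
    also have "\<dots> \<le> Gamma_ratio x k"
      using Gamma_ratio_ge_1[OF x, of M] Gamma_ratio_pos[of x k] truncation(1) x k
      by (simp add: divide_le_eq)
    finally show ?thesis .
  qed
  have summable: "?w summable_on sorted_lists_ge k"
    by (intro nonneg_bdd_above_summable_on bdd_aboveI2[where M = "Gamma_ratio x k"] weight_nonneg)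
      (use bound in auto)
  have lower: "Gamma_ratio x k / Gamma_ratio x M \<le> infsum ?w (sorted_lists_ge k)" if "k \<le> M" for M
  proof -
    have "(\<lambda>L. \<Prod>j\<in>{k..<M}. \<Sum>i<L. (x\<^sup>2 / real j ^ 2) ^ i) \<longlonglongrightarrow> (\<Prod>j\<in>{k..<M}. 1 / (1 - x\<^sup>2 / real j ^ 2))"
    proof (intro tendsto_prod)
      fix j assume "j \<in> {k..<M}"
      with k have "norm (x\<^sup>2 / real j ^ 2) < 1"
        using square_div_square_bounds[OF x, of j] by simp
      from geometric_sums[OF this]
      show "(\<lambda>L. \<Sum>i<L. (x\<^sup>2 / real j ^ 2) ^ i) \<longlonglongrightarrow> 1 / (1 - x\<^sup>2 / real j ^ 2)"
        unfolding sums_def .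
    qed
    then have lim: "(\<lambda>L. \<Prod>j\<in>{k..<M}. \<Sum>i<L. (x\<^sup>2 / real j ^ 2) ^ i)
                      \<longlonglongrightarrow> Gamma_ratio x k / Gamma_ratio x M"
      using prod_inverse_one_minus_eq_Gamma_ratio[OF x k that] by simp
    have "(\<Prod>j\<in>{k..<M}. \<Sum>i<L. (x\<^sup>2 / real j ^ 2) ^ i) \<le> infsum ?w (sorted_lists_ge k)"
      if "0 < L" for L
      unfolding sum_weight_bounded_sorted_lists[OF that, symmetric]
      using summable by (intro finite_sum_le_infsum finite_bounded_sorted_lists weight_nonneg)
        (auto simp: bounded_sorted_lists_def)
    then show ?thesis
      by (intro LIMSEQ_le_const2[OF lim] exI[of _ 1]) auto
  qed
  have "(\<lambda>M. Gamma_ratio x k / Gamma_ratio x M) \<longlonglongrightarrow> Gamma_ratio x k"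
    using tendsto_divide[OF tendsto_const Gamma_ratio_LIMSEQ[OF x]] by simp
  then have "Gamma_ratio x k \<le> infsum ?w (sorted_lists_ge k)"
    by (rule LIMSEQ_le_const2) (use lower in blast)
  moreover have "infsum ?w (sorted_lists_ge k) \<le> Gamma_ratio x k"
    using summable bound by (rule infsum_le_finite_sums)
  ultimately show ?thesis
    using has_sum_infsum[OF summable] by simp
qed

lemma summable_Gamma_ratio_div_power:
  assumes x: "\<bar>x\<bar> < 1" and n: "2 \<le> n"
  shows "summable (\<lambda>k. 1 / real (Suc k) ^ n * Gamma_ratio x (Suc k))"
proof (rule summable_comparison_test)
  show "summable (\<lambda>k. Gamma_ratio x 1 * inverse (real (Suc k) ^ 2))"
    by (intro summable_mult) (subst summable_Suc_iff, rule inverse_power_summable, simp)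
  have "norm (1 / real (Suc k) ^ n * Gamma_ratio x (Suc k))
          \<le> Gamma_ratio x 1 * inverse (real (Suc k) ^ 2)" for k
  proof -
    have "0 < Gamma_ratio x (Suc k)" by (rule Gamma_ratio_pos) (use x in auto)
    moreover have "Gamma_ratio x (Suc k) \<le> Gamma_ratio x 1"
      using Gamma_ratio_antimono[OF x, of 1 "Suc k"] by simp
    moreover have "1 / real (Suc k) ^ n \<le> inverse (real (Suc k) ^ 2)"
      unfolding inverse_eq_divide using n by (intro divide_left_mono power_increasing) auto
    ultimately have "1 / real (Suc k) ^ n * Gamma_ratio x (Suc k)
                       \<le> inverse (real (Suc k) ^ 2) * Gamma_ratio x 1"
      by (intro mult_mono) auto
    with \<open>0 < Gamma_ratio x (Suc k)\<close> show ?thesis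
      by (simp add: mult.commute)
  qed
  then show "\<exists>N. \<forall>k\<ge>N. norm (1 / real (Suc k) ^ n * Gamma_ratio x (Suc k))
                           \<le> Gamma_ratio x 1 * inverse (real (Suc k) ^ 2)"
    by blast
qed

lemma has_sum_weight_Sigma_sorted_lists:
  assumes x: "\<bar>x\<bar> < 1" and n: "2 \<le> n"
  shows "((\<lambda>(j, ks). 1 / real j ^ n * weight (x\<^sup>2) ks) has_sum
           (\<Sum>k. 1 / real (Suc k) ^ n * Gamma_ratio x (Suc k))) (Sigma {1..} sorted_lists_ge)"
proof -
  let ?f = "\<lambda>(j, ks). 1 / real j ^ n * weight (x\<^sup>2) ks"
  have inner: "((\<lambda>ks. ?f (j, ks)) has_sum 1 / real j ^ n * Gamma_ratio x j) (sorted_lists_ge j)"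
    if "j \<in> {1..}" for j
    using has_sum_cmult_right[OF has_sum_weight_Gamma_ratio[OF x, of j], of "1 / real j ^ n"] that
    by simp
  have "((\<lambda>k. 1 / real (Suc k) ^ n * Gamma_ratio x (Suc k)) has_sum
          (\<Sum>k. 1 / real (Suc k) ^ n * Gamma_ratio x (Suc k))) UNIV"
    using summable_Gamma_ratio_div_power[OF x n] Gamma_ratio_pos[of x] x
    by (intro sums_nonneg_imp_has_sum) (auto simp: summable_sums less_imp_le)
  moreover have "bij_betw Suc UNIV {1..}"
    by (rule bij_betwI[where g = "\<lambda>j. j - 1"]) auto
  ultimately have outer: "((\<lambda>j. 1 / real j ^ n * Gamma_ratio x j) has_sum
          (\<Sum>k. 1 / real (Suc k) ^ n * Gamma_ratio x (Suc k))) {1..}"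
    using has_sum_reindex_bij_betw[of Suc UNIV "{1..}" "\<lambda>j. 1 / real j ^ n * Gamma_ratio x j"]
    by simp
  have "?f summable_on Sigma {1..} sorted_lists_ge"
    using inner has_sum_imp_summable[OF outer]
    by (rule summable_on_SigmaI) (auto intro!: divide_nonneg_nonneg weight_nonneg)
  with inner outer show ?thesis
    by (rule has_sum_SigmaI)
qed

lemma infsum_length_fibre_eq_zeta_star:
  "infsum (\<lambda>(j, ks). 1 / real j ^ n * weight y ks)
     {p \<in> Sigma {1..} sorted_lists_ge. length (snd p) = m}
   = zeta_star (n # replicate m 2) * y ^ m"
proof -
  let ?as = "n # replicate m 2" and ?F = "{p \<in> Sigma {1..} sorted_lists_ge. length (snd p) = m}"
  have bij: "bij_betw (\<lambda>(j, ks). j # ks) ?F (mzs_index ?as)"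
  proof (rule bij_betwI[where g = "\<lambda>ks. (hd ks, tl ks)"])
    show "(\<lambda>ks. (hd ks, tl ks)) \<in> mzs_index ?as \<rightarrow> ?F"
      by (auto simp: mzs_index_def sorted_lists_ge_def length_Suc_conv)
  qed (fastforce simp: mzs_index_def sorted_lists_ge_def length_Suc_conv intro: le_trans)+
  let ?z = "\<lambda>ks. \<Prod>i<length ?as. 1 / real (ks ! i) ^ (?as ! i)"
  have summand: "1 / real j ^ n * weight y ks = y ^ m * ?z (j # ks)" if "length ks = m" for j ks
    using that by (simp add: weight_def prod_list_map_eq_prod_nth prod.lessThan_Suc_shift
                    del: prod.lessThan_Suc)
  have "infsum (\<lambda>(j, ks). 1 / real j ^ n * weight y ks) ?F
        = infsum (\<lambda>(j, ks). y ^ m * ?z (j # ks)) ?F"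
    by (rule infsum_cong) (clarsimp simp only: prod.case summand mem_Collect_eq snd_conv)
  also have "\<dots> = y ^ m * infsum (\<lambda>(j, ks). ?z (j # ks)) ?F"
    by (subst infsum_cmult_right'[symmetric]) (simp add: case_prod_unfold)
  also have "\<dots> = y ^ m * zeta_star ?as"
    unfolding zeta_star_def using infsum_reindex_bij_betw[OF bij, of ?z]
    by (simp add: case_prod_unfold)
  finally show ?thesis by simp
qed

theorem proposition3p1:
  fixes r :: nat and x :: real
  assumes "\<bar>x\<bar> < 1"
  shows "summable (\<lambda>k. 1 / real (Suc k) ^ (r + 2) *
            (Gamma (real (Suc k) + x) * Gamma (real (Suc k) - x) / Gamma (real (Suc k)) ^ 2))
       \<and> (\<lambda>m. zeta_star ((r + 2) # replicate m 2) * x ^ (2 * m)) sums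
           (\<Sum>k. 1 / real (Suc k) ^ (r + 2) *
            (Gamma (real (Suc k) + x) * Gamma (real (Suc k) - x) / Gamma (real (Suc k)) ^ 2))"
proof -
  let ?S = "\<Sum>k. 1 / real (Suc k) ^ (r + 2) * Gamma_ratio x (Suc k)"
  have "((\<lambda>(j, ks). 1 / real j ^ (r + 2) * weight (x\<^sup>2) ks) has_sum ?S)
          (Sigma {1..} sorted_lists_ge)"
    by (rule has_sum_weight_Sigma_sorted_lists[OF assms]) simp
  from has_sum_infsum_fibres[OF this, of "\<lambda>p. length (snd p)"]
  have "((\<lambda>m. zeta_star ((r + 2) # replicate m 2) * (x\<^sup>2) ^ m) has_sum ?S) UNIV"
    by (simp only: infsum_length_fibre_eq_zeta_star)
  then have "(\<lambda>m. zeta_star ((r + 2) # replicate m 2) * x ^ (2 * m)) sums ?S"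
    by (simp add: power_mult has_sum_imp_sums)
  with summable_Gamma_ratio_div_power[OF assms, of "r + 2"] show ?thesis
    unfolding Gamma_ratio_def by simp
qed

end
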